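(* Let $G=(V,E,w)$, $s$, $\tau$ (with $|\tau|\ge 2$) and a budget $b\ge 0$ be as in the context, and suppose that at least one feasible subgraph exists. Then among the maximizers of $\textsc{CD}_{\tau,s}(S)$ over all feasible subgraphs $S\subseteq G$, there is one that is a directed acyclic graph in which $s$ is the unique source (a source being a vertex $u$ with no edge $v\to u$ in the subgraph).
   Context: Let $G=(V,E,w)$ be a finite directed graph with non-negative edge weights $w:E\to\mathbb{R}_{\ge 0}$. A path from $u$ to $v$ in a subgraph $S\subseteq G$ is a sequence $u=v_0\to v_1\to\cdots\to v_k=v$ ($k\ge 0$) with each $v_i\to v_{i+1}$ an edge of $S$; for $i\le j$, $w_P(v_i,v_j)=\sum_{m=i}^{j-1} w(v_m\to v_{m+1})$. A vertex $y$ is reachable from $x$ in $S$ if there is a path from $x$ to $y$ in $S$ (a vertex is reachable from itself). Fix a start vertex $s\in V$ and a finite target set $\tau\subseteq V\setminus\{s\}$ with $|\tau|\ge 2$. The cost of a subgraph $S$ is $w(S)=\sum_{e\in E(S)} w(e)$. For a subgraph $S$ containing $s$ and $\tau$ in which every target is reachable from $s$: for a path $P=v_0\to\cdots\to v_k$ in $S$ with $v_0=s$, $v_k=t\in\tau$, let $\ell$ be the largest index such that some target in $\tau\setminus\{t\}$ is reachable from $v_\ell$ in $S$; the last deceptive point is $l(P,t)=v_\ell$. The unique distance of $t\in\tau$ is $\textsc{U}_S(t)=\min\{w_P(l(P,t),t): P \text{ a path in } S \text{ from } s \text{ to } t\}$, and the counterdeceptiveness of $S$ is $\textsc{CD}_{\tau,s}(S)=\min_{t\in\tau}\textsc{U}_S(t)$.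 Given a budget $b\ge 0$, a subgraph $S\subseteq G$ is feasible if $s\in V(S)$, $\tau\subseteq V(S)$, every target is reachable from $s$ in $S$, and $w(S)\le b$. A maximizer is a feasible $S$ maximizing $\textsc{CD}_{\tau,s}(S)$ among feasible subgraphs. *)

theory Defs
  imports Complex_Main
begin

definition is_subgraph :: "'a set \<Rightarrow> ('a \<times> 'a) set \<Rightarrow> 'a set \<Rightarrow> ('a \<times> 'a) set \<Rightarrow> bool" where
  "is_subgraph V E VS ES \<longleftrightarrow> VS \<subseteq> V \<and> ES \<subseteq> E \<and> ES \<subseteq> VS \<times> VS"

definition is_path :: "'a set \<Rightarrow> ('a \<times> 'a) set \<Rightarrow> 'a list \<Rightarrow> bool" where
  "is_path VS ES P \<longleftrightarrow> P \<noteq> [] \<and> set P \<subseteq> VS \<and>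
     (\<forall>i. Suc i < length P \<longrightarrow> (P ! i, P ! Suc i) \<in> ES)"

definition reachable :: "'a set \<Rightarrow> ('a \<times> 'a) set \<Rightarrow> 'a \<Rightarrow> 'a \<Rightarrow> bool" where
  "reachable VS ES x y \<longleftrightarrow> (\<exists>P. is_path VS ES P \<and> hd P = x \<and> last P = y)"

definition path_weight :: "('a \<times> 'a \<Rightarrow> real) \<Rightarrow> 'a list \<Rightarrow> nat \<Rightarrow> nat \<Rightarrow> real" where
  "path_weight w P i j = (\<Sum>m\<in>{i..<j}. w (P ! m, P ! Suc m))"

definition last_dec_idx :: "'a set \<Rightarrow> ('a \<times> 'a) set \<Rightarrow> 'a set \<Rightarrow> 'a list \<Rightarrow> 'a \<Rightarrow> nat" where
  "last_dec_idx VS ES \<tau> P t =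
     (GREATEST l. l < length P \<and> (\<exists>t'\<in>\<tau> - {t}. reachable VS ES (P ! l) t'))"

text \<open>Unique distance U_S(t): minimum over s-t paths P of w_P(l(P,t), t)
  (rendered as the infimum of the set of these values, which is attained).\<close>
definition unique_dist :: "'a set \<Rightarrow> ('a \<times> 'a) set \<Rightarrow> ('a \<times> 'a \<Rightarrow> real) \<Rightarrow> 'a \<Rightarrow> 'a set \<Rightarrow> 'a \<Rightarrow> real" where
  "unique_dist VS ES w s \<tau> t =
     Inf {path_weight w P (last_dec_idx VS ES \<tau> P t) (length P - 1) | P.
            is_path VS ES P \<and> hd P = s \<and> last P = t}"

definition counterdeceptiveness :: "'a set \<Rightarrow> ('a \<times> 'a) set \<Rightarrow> ('a \<times> 'a \<Rightarrow> real) \<Rightarrow> 'a \<Rightarrow> 'a set \<Rightarrow> real" where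
  "counterdeceptiveness VS ES w s \<tau> = Min ((\<lambda>t. unique_dist VS ES w s \<tau> t) ` \<tau>)"

definition feasible :: "'a set \<Rightarrow> ('a \<times> 'a) set \<Rightarrow> ('a \<times> 'a \<Rightarrow> real) \<Rightarrow> 'a \<Rightarrow> 'a set \<Rightarrow> real
    \<Rightarrow> 'a set \<Rightarrow> ('a \<times> 'a) set \<Rightarrow> bool" where
  "feasible V E w s \<tau> b VS ES \<longleftrightarrow> is_subgraph V E VS ES \<and> s \<in> VS \<and> \<tau> \<subseteq> VS \<and>
     (\<forall>t\<in>\<tau>. reachable VS ES s t) \<and> (\<Sum>e\<in>ES. w e) \<le> b"

definition maximizer :: "'a set \<Rightarrow> ('a \<times> 'a) set \<Rightarrow> ('a \<times> 'a \<Rightarrow> real) \<Rightarrow> 'a \<Rightarrow> 'a set \<Rightarrow> real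
    \<Rightarrow> 'a set \<Rightarrow> ('a \<times> 'a) set \<Rightarrow> bool" where
  "maximizer V E w s \<tau> b VS ES \<longleftrightarrow> feasible V E w s \<tau> b VS ES \<and>
     (\<forall>VS' ES'. feasible V E w s \<tau> b VS' ES' \<longrightarrow>
        counterdeceptiveness VS' ES' w s \<tau> \<le> counterdeceptiveness VS ES w s \<tau>)"

definition is_source :: "('a \<times> 'a) set \<Rightarrow> 'a \<Rightarrow> bool" where
  "is_source ES u \<longleftrightarrow> \<not> (\<exists>v. (v, u) \<in> ES)"

end

theory Submission
  imports Defs
begin

text \<open>Deleting edges only shrinks reachability, so along every path the last deceptive point
  moves no later, and with nonnegative weights each unique distance, hence the
  counterdeceptiveness, can only grow while the cost does not increase. Thus the breadth-first
  subgraph of a maximizer, made of the vertices reachable from s and the edges that raise the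
  hop distance from s by exactly one, is again a maximizer. It is acyclic because the hop distance
  strictly increases along its edges, and every reachable vertex other than s keeps the last edge
  of a shortest path into it, so s is its only source.\<close>

lemma is_path_singleton [simp]: "is_path VS ES [x] \<longleftrightarrow> x \<in> VS"
  by (auto simp: is_path_def)

lemma is_path_Cons_Cons [simp]:
  "is_path VS ES (x # y # zs) \<longleftrightarrow> x \<in> VS \<and> (x, y) \<in> ES \<and> is_path VS ES (y # zs)"
proof
  assume P: "is_path VS ES (x # y # zs)"
  have "(x, y) \<in> ES" using P unfolding is_path_def by force
  moreover have "((y # zs) ! i, (y # zs) ! Suc i) \<in> ES" if "Suc i < length (y # zs)" for i
    using P that unfolding is_path_def by (metis Suc_less_eq length_Cons nth_Cons_Suc)
  ultimately show "x \<in> VS \<and> (x, y) \<in> ES \<and> is_path VS ES (y # zs)"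
    using P unfolding is_path_def by auto
next
  assume "x \<in> VS \<and> (x, y) \<in> ES \<and> is_path VS ES (y # zs)"
  then show "is_path VS ES (x # y # zs)"
    unfolding is_path_def by (auto simp: less_Suc_eq_0_disj)
qed

lemma is_path_append:
  "is_path VS ES xs \<Longrightarrow> is_path VS ES ys \<Longrightarrow> (last xs, hd ys) \<in> ES \<Longrightarrow> is_path VS ES (xs @ ys)"
proof (induction xs rule: induct_list012)
  case 1
  then show ?case by (simp add: is_path_def)
next
  case (2 x)
  then show ?case by (cases ys) simp_all
next
  case (3 x y zs)
  then show ?case by simp
qed

lemma is_path_take: "is_path VS ES P \<Longrightarrow> 0 < n \<Longrightarrow> is_path VS ES (take n P)"
  unfolding is_path_def by (auto dest: in_set_takeD)

lemma is_path_drop: "is_path VS ES P \<Longrightarrow> n < length P \<Longrightarrow> is_path VS ES (drop n P)"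
  unfolding is_path_def by (auto dest: in_set_dropD)

lemma is_path_mono: "is_path VS' ES' P \<Longrightarrow> VS' \<subseteq> VS \<Longrightarrow> ES' \<subseteq> ES \<Longrightarrow> is_path VS ES P"
  unfolding is_path_def by blast

lemma reachable_mono:
  "reachable VS' ES' x y \<Longrightarrow> VS' \<subseteq> VS \<Longrightarrow> ES' \<subseteq> ES \<Longrightarrow> reachable VS ES x y"
  unfolding reachable_def using is_path_mono by blast

lemma reachable_refl: "x \<in> VS \<Longrightarrow> reachable VS ES x x"
  unfolding reachable_def by (intro exI[of _ "[x]"]) simp

lemma reachable_in_vertices: "reachable VS ES x y \<Longrightarrow> y \<in> VS"
  unfolding reachable_def is_path_def by (auto simp: last_conv_nth)

lemma is_path_prefix:
  assumes "is_path VS ES P" "i < length P"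
  shows "is_path VS ES (take (Suc i) P)" "hd (take (Suc i) P) = hd P" "last (take (Suc i) P) = P ! i"
proof -
  show "is_path VS ES (take (Suc i) P)" using assms(1) by (simp add: is_path_take)
  show "hd (take (Suc i) P) = hd P" by (simp add: hd_take)
  show "last (take (Suc i) P) = P ! i" using assms(2) by (simp add: take_Suc_conv_app_nth)
qed

lemma reachable_path_nth:
  "is_path VS ES P \<Longrightarrow> i < length P \<Longrightarrow> reachable VS ES (hd P) (P ! i)"
  unfolding reachable_def using is_path_prefix by blast

lemma path_last_edge:
  assumes "is_path VS ES P" "hd P = s" "last P = u" "u \<noteq> s"
  shows "(P ! (length P - 2), u) \<in> ES"
proof -
  obtain x y zs where "P = x # y # zs"
    using assms by (cases P rule: remdups_adj.cases) (auto simp: is_path_def)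
  then have "Suc (length P - 2) < length P" "P ! Suc (length P - 2) = u"
    using assms(3) by (auto simp: last_conv_nth)
  then show ?thesis using assms(1) unfolding is_path_def by metis
qed

lemma last_dec_idx_spec:
  assumes "t' \<in> \<tau> - {t}" "reachable VS ES (hd P) t'" "P \<noteq> []"
  shows "last_dec_idx VS ES \<tau> P t < length P \<and>
    (\<exists>t''\<in>\<tau> - {t}. reachable VS ES (P ! last_dec_idx VS ES \<tau> P t) t'')"
  unfolding last_dec_idx_def
proof (rule GreatestI_nat[where k=0 and b="length P"])
  show "0 < length P \<and> (\<exists>t''\<in>\<tau> - {t}. reachable VS ES (P ! 0) t'')"
    using assms by (metis hd_conv_nth length_greater_0_conv)
qed simp

lemma last_dec_idx_mono:
  assumes "t' \<in> \<tau> - {t}" "reachable VS' ES' (hd P) t'" "P \<noteq> []"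
    and "VS' \<subseteq> VS" "ES' \<subseteq> ES"
  shows "last_dec_idx VS' ES' \<tau> P t \<le> last_dec_idx VS ES \<tau> P t"
proof -
  have "last_dec_idx VS' ES' \<tau> P t < length P \<and>
    (\<exists>t''\<in>\<tau> - {t}. reachable VS ES (P ! last_dec_idx VS' ES' \<tau> P t) t'')"
    using last_dec_idx_spec[OF assms(1-3)] reachable_mono[OF _ assms(4,5)] by blast
  then show ?thesis
    unfolding last_dec_idx_def[of VS ES] by (rule Greatest_le_nat[where b="length P"]) simp
qed

lemma path_weight_nonneg:
  assumes "is_path VS ES P" "\<forall>e\<in>ES. 0 \<le> w e" "j < length P"
  shows "0 \<le> path_weight w P i j"
  unfolding path_weight_def
  by (rule sum_nonneg) (use assms in \<open>auto simp: is_path_def\<close>)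

lemma path_weight_suffix_antimono:
  assumes "is_path VS ES P" "\<forall>e\<in>ES. 0 \<le> w e" "i \<le> k" "k < length P"
  shows "path_weight w P k (length P - 1) \<le> path_weight w P i (length P - 1)"
proof -
  have "path_weight w P i (length P - 1) = path_weight w P i k + path_weight w P k (length P - 1)"
    unfolding path_weight_def using assms(3,4) by (simp add: sum.atLeastLessThan_concat)
  moreover have "0 \<le> path_weight w P i k" using path_weight_nonneg assms by blast
  ultimately show ?thesis by simp
qed

lemma unique_dist_antimono:
  assumes "\<forall>e\<in>ES. 0 \<le> w e" "VS' \<subseteq> VS" "ES' \<subseteq> ES"
    and "reachable VS' ES' s t" "t' \<in> \<tau> - {t}" "reachable VS' ES' s t'"
  shows "unique_dist VS ES w s \<tau> t \<le> unique_dist VS' ES' w s \<tau> t"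
proof -
  let ?A = "{path_weight w P (last_dec_idx VS ES \<tau> P t) (length P - 1) | P.
            is_path VS ES P \<and> hd P = s \<and> last P = t}"
  have bdd: "bdd_below ?A"
  proof (rule bdd_belowI[where m=0])
    fix x assume "x \<in> ?A"
    then obtain P where "is_path VS ES P" "x = path_weight w P (last_dec_idx VS ES \<tau> P t) (length P - 1)"
      by blast
    moreover have "length P - 1 < length P" using \<open>is_path VS ES P\<close> by (simp add: is_path_def)
    ultimately show "0 \<le> x" using path_weight_nonneg[OF _ assms(1)] by blast
  qed
  have "Inf ?A \<le> path_weight w P (last_dec_idx VS' ES' \<tau> P t) (length P - 1)"
    if P: "is_path VS' ES' P" "hd P = s" "last P = t" for P
  proof -
    have P_big: "is_path VS ES P" using is_path_mono P(1) assms(2,3) .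
    have "P \<noteq> []" using P(1) by (simp add: is_path_def)
    have reach: "reachable VS' ES' (hd P) t'" using assms(6) P(2) by simp
    note dec_idx = last_dec_idx_spec[OF assms(5) reachable_mono[OF reach assms(2,3)] \<open>P \<noteq> []\<close>]
      last_dec_idx_mono[OF assms(5) reach \<open>P \<noteq> []\<close> assms(2,3)]
    have "Inf ?A \<le> path_weight w P (last_dec_idx VS ES \<tau> P t) (length P - 1)"
      by (rule cInf_lower[OF _ bdd]) (use P_big P in blast)
    also have "\<dots> \<le> path_weight w P (last_dec_idx VS' ES' \<tau> P t) (length P - 1)"
      by (rule path_weight_suffix_antimono[OF P_big assms(1)])
        (use dec_idx in auto)
    finally show ?thesis .
  qed
  moreover have "\<exists>P. is_path VS' ES' P \<and> hd P = s \<and> last P = t"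
    using assms(4) unfolding reachable_def .
  ultimately show ?thesis unfolding unique_dist_def by (intro cInf_greatest) blast+
qed

lemma counterdeceptiveness_antimono:
  assumes "\<forall>e\<in>ES. 0 \<le> w e" "VS' \<subseteq> VS" "ES' \<subseteq> ES"
    and "\<forall>t\<in>\<tau>. reachable VS' ES' s t" "card \<tau> \<ge> 2"
  shows "counterdeceptiveness VS ES w s \<tau> \<le> counterdeceptiveness VS' ES' w s \<tau>"
proof -
  have fin: "finite \<tau>" using assms(5) by (metis card.infinite not_numeral_le_zero)
  have ud: "unique_dist VS ES w s \<tau> t \<le> unique_dist VS' ES' w s \<tau> t" if "t \<in> \<tau>" for t
  proof -
    have "card (\<tau> - {t}) > 0" using that assms(5) fin by simp
    then obtain t' where "t' \<in> \<tau> - {t}" by (metis card.empty ex_in_conv less_irrefl)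
    then show ?thesis
      using unique_dist_antimono[OF assms(1-3)] assms(4) that by blast
  qed
  have "\<tau> \<noteq> {}" using assms(5) by auto
  then obtain t0 where "t0 \<in> \<tau>"
    and t0: "counterdeceptiveness VS' ES' w s \<tau> = unique_dist VS' ES' w s \<tau> t0"
    unfolding counterdeceptiveness_def using Min_in[OF finite_imageI[OF fin]] by blast
  then have "counterdeceptiveness VS ES w s \<tau> \<le> unique_dist VS ES w s \<tau> t0"
    unfolding counterdeceptiveness_def using fin by simp
  also have "\<dots> \<le> counterdeceptiveness VS' ES' w s \<tau>" using ud \<open>t0 \<in> \<tau>\<close> t0 by simp
  finally show ?thesis .
qed

definition hop_dist :: "'a set \<Rightarrow> ('a \<times> 'a) set \<Rightarrow> 'a \<Rightarrow> 'a \<Rightarrow> nat" where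
  "hop_dist VS ES s v = (LEAST n. \<exists>P. is_path VS ES P \<and> hd P = s \<and> last P = v \<and> length P = Suc n)"

lemma hop_dist_path:
  assumes "reachable VS ES s v"
  obtains P where "is_path VS ES P" "hd P = s" "last P = v" "length P = Suc (hop_dist VS ES s v)"
proof -
  obtain P where "is_path VS ES P" "hd P = s" "last P = v"
    using assms unfolding reachable_def by blast
  then have "\<exists>n P. is_path VS ES P \<and> hd P = s \<and> last P = v \<and> length P = Suc n"
    by (metis is_path_def length_greater_0_conv Suc_pred)
  from LeastI_ex[OF this] show ?thesis using that unfolding hop_dist_def by blast
qed

lemma hop_dist_le:
  assumes "is_path VS ES P" "hd P = s" "last P = v"
  shows "hop_dist VS ES s v \<le> length P - 1"
proof -
  have "length P = Suc (length P - 1)" using assms(1) by (simp add: is_path_def)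
  then show ?thesis unfolding hop_dist_def using assms by (intro Least_le) blast
qed

lemma hop_dist_self: "s \<in> VS \<Longrightarrow> hop_dist VS ES s s = 0"
  using hop_dist_le[of VS ES "[s]" s s] by simp

text \<open>Every vertex on a shortest path is reached along it by a shortest path:
  splicing a shorter path to the vertex into the path would shorten the whole path.\<close>

lemma hop_dist_shortest_path_nth:
  assumes P: "is_path VS ES P" "hd P = s" "length P = Suc (hop_dist VS ES s (last P))"
    and i: "i < length P"
  shows "hop_dist VS ES s (P ! i) = i"
proof (rule antisym)
  from hop_dist_le[OF is_path_prefix[OF P(1) i, unfolded P(2)]] show "hop_dist VS ES s (P ! i) \<le> i" using i by simp
next
  show "i \<le> hop_dist VS ES s (P ! i)"
  proof (rule ccontr)
    assume shorter: "\<not> i \<le> hop_dist VS ES s (P ! i)"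
    obtain Q where Q: "is_path VS ES Q" "hd Q = s" "last Q = P ! i"
      and len_Q: "length Q = Suc (hop_dist VS ES s (P ! i))"
      using hop_dist_path[OF reachable_path_nth[OF P(1) i, unfolded P(2)]] .
    let ?R = "Q @ drop (Suc i) P"
    have R: "is_path VS ES ?R \<and> last ?R = last P"
    proof (cases "Suc i < length P")
      case True
      have "(P ! i, P ! Suc i) \<in> ES" using P(1) True by (simp add: is_path_def)
      then have "is_path VS ES ?R"
        using is_path_append[OF Q(1) is_path_drop[OF P(1) True]] Q(3) True
        by (simp add: hd_drop_conv_nth)
      then show ?thesis using True by simp
    next
      case False
      then have "i = length P - 1" using i by simp
      moreover have "P \<noteq> []" using i by auto
      ultimately have "P ! i = last P" by (simp add: last_conv_nth)
      then show ?thesis using False Q by simp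
    qed
    moreover have "hd ?R = s" using Q(1,2) by (simp add: is_path_def)
    ultimately have "hop_dist VS ES s (last P) \<le> length ?R - 1" using hop_dist_le by metis
    moreover have "length ?R < length P" using shorter len_Q i by simp
    ultimately show False using P(3) len_Q by simp
  qed
qed

text \<open>Both endpoints must be reachable: otherwise hop_dist is the junk value of LEAST.\<close>

definition bfs_edges :: "'a set \<Rightarrow> ('a \<times> 'a) set \<Rightarrow> 'a \<Rightarrow> ('a \<times> 'a) set" where
  "bfs_edges VS ES s = {(u, v) \<in> ES. reachable VS ES s u \<and> reachable VS ES s v \<and>
     hop_dist VS ES s v = Suc (hop_dist VS ES s u)}"

lemma bfs_edges_subset:
  "bfs_edges VS ES s \<subseteq> ES" "bfs_edges VS ES s \<subseteq> {x. reachable VS ES s x} \<times> {x. reachable VS ES s x}"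
  unfolding bfs_edges_def by auto

lemma reachable_bfs_edges:
  assumes "reachable VS ES s v"
  shows "reachable {x. reachable VS ES s x} (bfs_edges VS ES s) s v"
proof -
  obtain P where P: "is_path VS ES P" "hd P = s" "last P = v"
    and len: "length P = Suc (hop_dist VS ES s v)"
    using hop_dist_path[OF assms] .
  have hop: "hop_dist VS ES s (P ! i) = i" if "i < length P" for i
    using hop_dist_shortest_path_nth[OF P(1,2)] P(3) len that by simp
  have "is_path {x. reachable VS ES s x} (bfs_edges VS ES s) P"
    unfolding is_path_def bfs_edges_def
    using P(1) reachable_path_nth[OF P(1), unfolded P(2)] hop
    by (auto simp: is_path_def in_set_conv_nth)
  then show ?thesis unfolding reachable_def using P(2,3) by blast
qed

lemma acyclic_bfs_edges: "acyclic (bfs_edges VS ES s)"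
proof (rule wf_acyclic)
  have "bfs_edges VS ES s \<subseteq> inv_image less_than (hop_dist VS ES s)"
    unfolding bfs_edges_def by auto
  then show "wf (bfs_edges VS ES s)" by (rule wf_subset[OF wf_inv_image[OF wf_less_than]])
qed

lemma is_source_bfs_edges_iff:
  assumes "s \<in> VS" "reachable VS ES s u"
  shows "is_source (bfs_edges VS ES s) u \<longleftrightarrow> u = s"
proof
  assume "is_source (bfs_edges VS ES s) u"
  moreover obtain P where "is_path {x. reachable VS ES s x} (bfs_edges VS ES s) P" "hd P = s" "last P = u"
    using reachable_bfs_edges[OF assms(2)] unfolding reachable_def by blast
  ultimately show "u = s" using path_last_edge unfolding is_source_def by metis
next
  assume "u = s"
  then show "is_source (bfs_edges VS ES s) u"
    unfolding is_source_def bfs_edges_def using hop_dist_self[OF assms(1)] by simp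
qed

lemma feasible_bfs_subgraph:
  assumes "feasible V E w s \<tau> b VS ES" "finite E" "\<forall>e\<in>E. 0 \<le> w e"
  shows "feasible V E w s \<tau> b {x. reachable VS ES s x} (bfs_edges VS ES s)"
  unfolding feasible_def is_subgraph_def
proof (intro conjI)
  have ES: "ES \<subseteq> E" "VS \<subseteq> V" and "s \<in> VS" and reach: "\<forall>t\<in>\<tau>. reachable VS ES s t"
    and cost: "(\<Sum>e\<in>ES. w e) \<le> b"
    using assms(1) by (auto simp: feasible_def is_subgraph_def)
  show "{x. reachable VS ES s x} \<subseteq> V" using ES(2) reachable_in_vertices[of VS ES s] by blast
  show "bfs_edges VS ES s \<subseteq> E" using bfs_edges_subset(1) ES(1) by (rule order_trans)
  show "bfs_edges VS ES s \<subseteq> {x. reachable VS ES s x} \<times> {x. reachable VS ES s x}"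
    by (rule bfs_edges_subset(2))
  show "s \<in> {x. reachable VS ES s x}" using reachable_refl[OF \<open>s \<in> VS\<close>] by simp
  show "\<tau> \<subseteq> {x. reachable VS ES s x}" using reach by blast
  show "\<forall>t\<in>\<tau>. reachable {x. reachable VS ES s x} (bfs_edges VS ES s) s t"
    using reach reachable_bfs_edges[of VS ES s] by blast
  have "(\<Sum>e\<in>bfs_edges VS ES s. w e) \<le> (\<Sum>e\<in>ES. w e)"
  proof (rule sum_mono2)
    show "finite ES" using ES(1) assms(2) by (rule finite_subset)
    show "bfs_edges VS ES s \<subseteq> ES" by (rule bfs_edges_subset(1))
  qed (use ES(1) assms(3) in blast)
  then show "(\<Sum>e\<in>bfs_edges VS ES s. w e) \<le> b" using cost by linarith
qed

lemma counterdeceptiveness_le_bfs: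
  assumes "\<forall>e\<in>ES. 0 \<le> w e" "\<forall>t\<in>\<tau>. reachable VS ES s t" "card \<tau> \<ge> 2"
  shows "counterdeceptiveness VS ES w s \<tau> \<le>
    counterdeceptiveness {x. reachable VS ES s x} (bfs_edges VS ES s) w s \<tau>"
proof (rule counterdeceptiveness_antimono[OF assms(1) _ bfs_edges_subset(1) _ assms(3)])
  show "{x. reachable VS ES s x} \<subseteq> VS" using reachable_in_vertices[of VS ES s] by blast
  show "\<forall>t\<in>\<tau>. reachable {x. reachable VS ES s x} (bfs_edges VS ES s) s t"
    using assms(2) reachable_bfs_edges[of VS ES s] by blast
qed

lemma maximizer_exists:
  assumes "finite V" "E \<subseteq> V \<times> V" "\<exists>VS ES. feasible V E w s \<tau> b VS ES"
  shows "\<exists>VS ES. maximizer V E w s \<tau> b VS ES"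
proof -
  let ?F = "{(VS, ES). feasible V E w s \<tau> b VS ES}"
  let ?cd = "\<lambda>(VS, ES). counterdeceptiveness VS ES w s \<tau>"
  have "?F \<subseteq> Pow V \<times> Pow (V \<times> V)"
    using assms(2) by (auto simp: feasible_def is_subgraph_def)
  then have fin: "finite ?F" by (rule finite_subset) (simp add: assms(1))
  have "?F \<noteq> {}" using assms(3) by auto
  then have "Max (?cd ` ?F) \<in> ?cd ` ?F" using fin by simp
  then obtain VS ES where "feasible V E w s \<tau> b VS ES"
    and S: "Max (?cd ` ?F) = counterdeceptiveness VS ES w s \<tau>"
    by auto
  moreover have "counterdeceptiveness VS' ES' w s \<tau> \<le> counterdeceptiveness VS ES w s \<tau>"
    if "feasible V E w s \<tau> b VS' ES'" for VS' ES'
  proof -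
    have "?cd (VS', ES') \<in> ?cd ` ?F" using that by blast
    then show ?thesis unfolding S[symmetric] using fin by simp
  qed
  ultimately show ?thesis unfolding maximizer_def by blast
qed

lemma maximizer_if_le:
  assumes "maximizer V E w s \<tau> b VS ES" "feasible V E w s \<tau> b VS' ES'"
    and "counterdeceptiveness VS ES w s \<tau> \<le> counterdeceptiveness VS' ES' w s \<tau>"
  shows "maximizer V E w s \<tau> b VS' ES'"
  using assms order_trans unfolding maximizer_def by blast

theorem lemma2:
  fixes V :: "'a set" and E :: "('a \<times> 'a) set" and w :: "'a \<times> 'a \<Rightarrow> real"
    and s :: 'a and \<tau> :: "'a set" and b :: real
  assumes "finite V"
    and "E \<subseteq> V \<times> V"
    and "\<forall>e\<in>E. 0 \<le> w e"
    and "s \<in> V"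
    and "\<tau> \<subseteq> V - {s}"
    and "card \<tau> \<ge> 2"
    and "b \<ge> 0"
    and "\<exists>VS ES. feasible V E w s \<tau> b VS ES"
  shows "\<exists>VS ES. maximizer V E w s \<tau> b VS ES \<and> acyclic ES \<and>
           (\<forall>u\<in>VS. is_source ES u \<longleftrightarrow> u = s)"
proof -
  obtain VS ES where max: "maximizer V E w s \<tau> b VS ES"
    using maximizer_exists[OF assms(1,2,8)] by blast
  then have feas: "feasible V E w s \<tau> b VS ES" by (simp add: maximizer_def)
  let ?R = "{x. reachable VS ES s x}" and ?T = "bfs_edges VS ES s"
  have "finite E" by (rule finite_subset[OF assms(2)]) (simp add: assms(1))
  then have feas_bfs: "feasible V E w s \<tau> b ?R ?T"
    using feasible_bfs_subgraph[OF feas _ assms(3)] by blast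
  have "ES \<subseteq> E" "\<forall>t\<in>\<tau>. reachable VS ES s t"
    using feas by (simp_all add: feasible_def is_subgraph_def)
  then have "counterdeceptiveness VS ES w s \<tau> \<le> counterdeceptiveness ?R ?T w s \<tau>"
    using assms(3) by (intro counterdeceptiveness_le_bfs[OF _ _ assms(6)]) blast+
  then have "maximizer V E w s \<tau> b ?R ?T" by (rule maximizer_if_le[OF max feas_bfs])
  moreover have "\<forall>u\<in>?R. is_source ?T u \<longleftrightarrow> u = s"
    using feas is_source_bfs_edges_iff[of s VS ES] by (simp add: feasible_def)
  ultimately show ?thesis using acyclic_bfs_edges[of VS ES s] by blast
qed

end
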